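(* Let $(G,k)$ be an instance, let $v$ be a large-sparse vertex, and let $B\subseteq V\setminus\{v\}$ with $|B|\le 2k$ be such that $G-B$ has no cycle passing through $v$. Let $\mathcal{C}_{\mathrm{tree}}$ (resp. $\mathcal{C}_{\mathrm{nontree}}$) be the family of connected components of $G-v-B$ that contain a neighbor of $v$ and are trees (resp. are not trees). Assume $|\mathcal{C}_{\mathrm{tree}}|\ge 4k$ and every $C\in\mathcal{C}_{\mathrm{tree}}$ contains a vertex adjacent to some vertex of $B$. Let $B'\subseteq B$ and $\mathcal{C}'\subseteq\mathcal{C}_{\mathrm{tree}}$ be nonempty with $|B'|\le k$ such that (a) every vertex of $B$ adjacent to a vertex of some $C\in\mathcal{C}'$ lies in $B'$, and (b) there is a map assigning to each $C\in\mathcal{C}'$ a vertex of $B'$ adjacent to some vertex of $C$, such that every vertex of $B'$ is assigned to exactly two members of $\mathcal{C}'$. Let $G'$ be obtained from $G$ by deleting all edges between $v$ and $\bigcup_{C\in\mathcal{C}'}V(C)$ and then joining $v$ to each vertex of $B'$ by a double edge (two parallel edges). Then $(G,k)$ is a yes-instance if and only if $(G',k)$ is a yes-instance.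
   Context: Graphs are undirected, without self-loops, possibly with multi-edges. $N(v)$ is the set of vertices adjacent to $v$; $\rho(v)$ is the number of unordered pairs $\{u_1,u_2\}\subseteq N(v)$ joined by at least one edge. A vertex $v$ is large-sparse if $|N(v)|>7k$ and $\rho(v)\le |N(v)|(|N(v)|-1)/4$. A vertex set induces a clique if between any two distinct vertices there is exactly one edge, and a tree if it is connected and acyclic (two parallel edges form a cycle). A feasible solution is $X\subseteq V$, $|X|\le k$, with every component of $G-X$ a clique or a tree; $(G,k)$ is a yes-instance if a feasible solution exists. *)

theory Defs
  imports Complex_Main
begin

text \<open>A finite undirected multigraph without self-loops: a finite vertex set V and an
  edge-multiplicity function m (m u w = number of parallel edges between u and w).\<close>

definition mgraph :: "'a set \<Rightarrow> ('a \<Rightarrow> 'a \<Rightarrow> nat) \<Rightarrow> bool" where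
  "mgraph V m \<longleftrightarrow> finite V \<and> (\<forall>u w. m u w = m w u) \<and> (\<forall>u. m u u = 0)
     \<and> (\<forall>u w. m u w > 0 \<longrightarrow> u \<in> V \<and> w \<in> V)"

definition adj :: "('a \<Rightarrow> 'a \<Rightarrow> nat) \<Rightarrow> 'a \<Rightarrow> 'a \<Rightarrow> bool" where
  "adj m u w \<longleftrightarrow> m u w > 0"

definition nbhd :: "'a set \<Rightarrow> ('a \<Rightarrow> 'a \<Rightarrow> nat) \<Rightarrow> 'a \<Rightarrow> 'a set" where
  "nbhd V m v = {u \<in> V. adj m v u}"

definition rho :: "'a set \<Rightarrow> ('a \<Rightarrow> 'a \<Rightarrow> nat) \<Rightarrow> 'a \<Rightarrow> nat" where
  "rho V m v = card {{u1, u2} | u1 u2. u1 \<in> nbhd V m v \<and> u2 \<in> nbhd V m v \<and> u1 \<noteq> u2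
                                        \<and> adj m u1 u2}"

definition large_sparse :: "'a set \<Rightarrow> ('a \<Rightarrow> 'a \<Rightarrow> nat) \<Rightarrow> nat \<Rightarrow> 'a \<Rightarrow> bool" where
  "large_sparse V m k v \<longleftrightarrow> v \<in> V \<and> card (nbhd V m v) > 7 * k \<and>
     real (rho V m v) \<le> real (card (nbhd V m v)) * (real (card (nbhd V m v)) - 1) / 4"

definition reach :: "('a \<Rightarrow> 'a \<Rightarrow> nat) \<Rightarrow> 'a set \<Rightarrow> 'a \<Rightarrow> 'a \<Rightarrow> bool" where
  "reach m S = (\<lambda>u w. u \<in> S \<and> w \<in> S \<and> adj m u w)\<^sup>*\<^sup>*"

definition connected_in :: "('a \<Rightarrow> 'a \<Rightarrow> nat) \<Rightarrow> 'a set \<Rightarrow> bool" where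
  "connected_in m S \<longleftrightarrow> S \<noteq> {} \<and> (\<forall>u\<in>S. \<forall>w\<in>S. reach m S u w)"

definition components :: "('a \<Rightarrow> 'a \<Rightarrow> nat) \<Rightarrow> 'a set \<Rightarrow> 'a set set" where
  "components m S = {{w. reach m S u w} | u. u \<in> S}"

definition is_cycle :: "('a \<Rightarrow> 'a \<Rightarrow> nat) \<Rightarrow> 'a set \<Rightarrow> 'a list \<Rightarrow> bool" where
  "is_cycle m S xs \<longleftrightarrow> distinct xs \<and> set xs \<subseteq> S \<and>
     ((length xs = 2 \<and> m (xs ! 0) (xs ! 1) \<ge> 2) \<or>
      (length xs \<ge> 3 \<and> (\<forall>i < length xs. adj m (xs ! i) (xs ! ((i + 1) mod length xs)))))"

definition acyclic_in :: "('a \<Rightarrow> 'a \<Rightarrow> nat) \<Rightarrow> 'a set \<Rightarrow> bool" where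
  "acyclic_in m S \<longleftrightarrow> \<not> (\<exists>xs. is_cycle m S xs)"

definition is_tree :: "('a \<Rightarrow> 'a \<Rightarrow> nat) \<Rightarrow> 'a set \<Rightarrow> bool" where
  "is_tree m S \<longleftrightarrow> connected_in m S \<and> acyclic_in m S"

definition is_clique :: "('a \<Rightarrow> 'a \<Rightarrow> nat) \<Rightarrow> 'a set \<Rightarrow> bool" where
  "is_clique m S \<longleftrightarrow> (\<forall>u\<in>S. \<forall>w\<in>S. u \<noteq> w \<longrightarrow> m u w = 1)"

definition feasible :: "'a set \<Rightarrow> ('a \<Rightarrow> 'a \<Rightarrow> nat) \<Rightarrow> nat \<Rightarrow> 'a set \<Rightarrow> bool" where
  "feasible V m k X \<longleftrightarrow> X \<subseteq> V \<and> card X \<le> k \<and>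
     (\<forall>C \<in> components m (V - X). is_clique m C \<or> is_tree m C)"

definition yes_instance :: "'a set \<Rightarrow> ('a \<Rightarrow> 'a \<Rightarrow> nat) \<Rightarrow> nat \<Rightarrow> bool" where
  "yes_instance V m k \<longleftrightarrow> (\<exists>X. feasible V m k X)"

definition cycle_through :: "'a set \<Rightarrow> ('a \<Rightarrow> 'a \<Rightarrow> nat) \<Rightarrow> 'a set \<Rightarrow> 'a \<Rightarrow> bool" where
  "cycle_through V m B v \<longleftrightarrow> (\<exists>xs. is_cycle m (V - B) xs \<and> v \<in> set xs)"

definition C_tree :: "'a set \<Rightarrow> ('a \<Rightarrow> 'a \<Rightarrow> nat) \<Rightarrow> 'a set \<Rightarrow> 'a \<Rightarrow> 'a set set" where
  "C_tree V m B v = {C \<in> components m (V - {v} - B). C \<inter> nbhd V m v \<noteq> {} \<and> is_tree m C}"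

definition reduced :: "('a \<Rightarrow> 'a \<Rightarrow> nat) \<Rightarrow> 'a \<Rightarrow> 'a set \<Rightarrow> 'a set set \<Rightarrow> 'a \<Rightarrow> 'a \<Rightarrow> nat" where
  "reduced m v B' Cs = (\<lambda>x y.
     (if (x = v \<and> y \<in> \<Union>Cs) \<or> (y = v \<and> x \<in> \<Union>Cs) then 0 else m x y)
     + (if (x = v \<and> y \<in> B') \<or> (y = v \<and> x \<in> B') then 2 else 0))"

end

theory Submission
  imports Defs
begin

text \<open>
  Let Z be the union of the components in Cs. If a solution contains v, then G and G'
  coincide after deleting it, so assume it avoids v. Then the component of v left by the
  solution is a tree: it cannot be a clique, because v has neighbours in at least 4k tree
  components of G - v - B, of which a clique can meet only one and a solution of size at
  most k can hit at most k (in G' the 2|B'| components of Cs are lost, but B' is then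
  forced into the solution).

  Forward: for b in B' outside a solution X, X must hit one of the two components assigned
  to b, otherwise v, these two components and b close a cycle in the tree component of v.
  Hence X' = (X - Z) \<union> B' is no larger than X. In G' - X' every member of Cs is an
  isolated tree, and every other component is a connected part of a component of G - X.

  Backward: a solution X' of G' avoiding v contains B', since a double edge can lie neither
  in a clique nor in a tree. A cycle of G - X' cannot meet Z: once B' is removed, a member
  of Cs is attached to the rest of the graph only at v, so the cycle would be a cycle of
  G - B through v. Hence the component of v in G - X' is the tree component of v in G' - X'
  with trees of Cs attached at v, and the components avoiding v are the same in G and G'.
\<close>

section \<open>Reachability and components\<close>

definition sym_mult :: "('a \<Rightarrow> 'a \<Rightarrow> nat) \<Rightarrow> bool" where
  "sym_mult m \<longleftrightarrow> (\<forall>u w. m u w = m w u)"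

definition adj_closed :: "('a \<Rightarrow> 'a \<Rightarrow> nat) \<Rightarrow> 'a set \<Rightarrow> 'a set \<Rightarrow> bool" where
  "adj_closed m S A \<longleftrightarrow> (\<forall>x\<in>A. \<forall>y\<in>S. adj m x y \<longrightarrow> y \<in> A)"

definition clique_or_tree :: "('a \<Rightarrow> 'a \<Rightarrow> nat) \<Rightarrow> 'a set \<Rightarrow> bool" where
  "clique_or_tree m C \<longleftrightarrow> is_clique m C \<or> is_tree m C"

lemma feasible_iff:
  "feasible V m k X \<longleftrightarrow>
     X \<subseteq> V \<and> card X \<le> k \<and> (\<forall>C \<in> components m (V - X). clique_or_tree m C)"
  unfolding feasible_def clique_or_tree_def ..

lemma adj_sym: "sym_mult m \<Longrightarrow> adj m u w \<Longrightarrow> adj m w u"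
  by (simp add: sym_mult_def adj_def)

lemma reach_refl [simp]: "reach m S u u"
  unfolding reach_def by simp

lemma reach_trans: "reach m S u w \<Longrightarrow> reach m S w x \<Longrightarrow> reach m S u x"
  unfolding reach_def by (rule rtranclp_trans)

lemma reach_edge: "u \<in> S \<Longrightarrow> w \<in> S \<Longrightarrow> adj m u w \<Longrightarrow> reach m S u w"
  unfolding reach_def by (rule r_into_rtranclp) simp

lemma reach_mono: "reach m S u w \<Longrightarrow> S \<subseteq> T \<Longrightarrow> reach m T u w"
  unfolding reach_def by (erule mono_rtranclp[rule_format, rotated]) auto

lemma reach_sym: "sym_mult m \<Longrightarrow> reach m S u w \<Longrightarrow> reach m S w u"
  unfolding reach_def
  by (rule symp_rtranclp[THEN sympD]) (auto intro: sympI simp: adj_sym)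

lemma reach_cong:
  assumes "\<And>x y. x \<in> S \<Longrightarrow> y \<in> S \<Longrightarrow> m x y = m' x y"
  shows "reach m S = reach m' S"
proof -
  have "(\<lambda>u w. u \<in> S \<and> w \<in> S \<and> adj m u w) = (\<lambda>u w. u \<in> S \<and> w \<in> S \<and> adj m' u w)"
    using assms by (auto simp: adj_def fun_eq_iff)
  then show ?thesis unfolding reach_def by simp
qed

lemma reach_adj_closed:
  assumes "reach m S u w" "u \<in> A" "adj_closed m S A"
  shows "w \<in> A"
  using assms unfolding reach_def adj_closed_def
  by (induction rule: rtranclp_induct) auto

lemma reach_restrict:
  assumes "reach m S u w" "u \<in> A" "A \<subseteq> S" "adj_closed m S A"
  shows "reach m A u w"
  using assms(1) unfolding reach_def
proof (induction rule: rtranclp_induct)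
  case (step y z)
  have "reach m S u y" using step.hyps(1) unfolding reach_def .
  then have "y \<in> A" by (rule reach_adj_closed[OF _ assms(2,4)])
  with step assms(4) show ?case
    unfolding adj_closed_def by (auto intro: rtranclp.rtrancl_into_rtrancl)
qed simp

lemma connected_in_cong:
  assumes "\<And>x y. x \<in> A \<Longrightarrow> y \<in> A \<Longrightarrow> m x y = m' x y"
  shows "connected_in m A \<longleftrightarrow> connected_in m' A"
  unfolding connected_in_def by (simp add: reach_cong[of A m m', OF assms])

lemma connected_in_if_reach_from:
  assumes "sym_mult m" "u \<in> A" "\<forall>w\<in>A. reach m A u w"
  shows "connected_in m A"
proof -
  have "reach m A x w" if "x \<in> A" "w \<in> A" for x w
    using reach_sym[OF assms(1)] assms(3) that by (blast intro: reach_trans)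
  then show ?thesis unfolding connected_in_def using assms(2) by blast
qed

lemma component_of_in_components: "u \<in> S \<Longrightarrow> {w. reach m S u w} \<in> components m S"
  unfolding components_def by auto

lemma component_subset: "K \<in> components m S \<Longrightarrow> K \<subseteq> S"
  unfolding components_def using reach_adj_closed[of m S _ _ S] by (auto simp: adj_closed_def)

lemma component_eq:
  assumes "sym_mult m" "K \<in> components m S" "x \<in> K"
  shows "K = {w. reach m S x w}"
proof -
  obtain u where K: "K = {w. reach m S u w}" using assms(2) unfolding components_def by auto
  then have "reach m S u x" "reach m S x u" using assms(3) reach_sym[OF assms(1)] by auto
  then show ?thesis unfolding K by (blast intro: reach_trans)
qed

lemma components_disjoint:
  "sym_mult m \<Longrightarrow> K \<in> components m S \<Longrightarrow> L \<in> components m S \<Longrightarrow> x \<in> K \<Longrightarrow> x \<in> L \<Longrightarrow> K = L"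
  using component_eq[of m K S x] component_eq[of m L S x] by simp

lemma component_adj_closed:
  assumes "sym_mult m" "K \<in> components m S"
  shows "adj_closed m S K"
  unfolding adj_closed_def
proof (intro ballI impI)
  fix x y assume "x \<in> K" "y \<in> S" "adj m x y"
  moreover have "x \<in> S" using \<open>x \<in> K\<close> component_subset[OF assms(2)] by blast
  ultimately show "y \<in> K" using component_eq[OF assms \<open>x \<in> K\<close>] reach_edge[of x S y m] by blast
qed

lemma component_connected:
  assumes "sym_mult m" "K \<in> components m S"
  shows "connected_in m K"
proof -
  have "reach m K x w" if "x \<in> K" "w \<in> K" for x w
  proof -
    have "reach m S x w" using component_eq[OF assms that(1)] that(2) by blast
    then show ?thesis
      by (rule reach_restrict[OF _ that(1) component_subset[OF assms(2)] component_adj_closed[OF assms]])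
  qed
  moreover obtain u where "K = {w. reach m S u w}" using assms(2) unfolding components_def by auto
  then have "u \<in> K" by simp
  ultimately show ?thesis unfolding connected_in_def by blast
qed

lemma connected_subset_component:
  assumes "sym_mult m" "connected_in m A" "A \<subseteq> S" "K \<in> components m S" "x \<in> A" "x \<in> K"
  shows "A \<subseteq> K"
proof
  fix y assume "y \<in> A"
  then have "reach m A x y" using assms(2,5) unfolding connected_in_def by blast
  then have "reach m S x y" using assms(3) by (rule reach_mono)
  then show "y \<in> K" using component_eq[OF assms(1,4,6)] by blast
qed

lemma connected_adj_closed_component:
  assumes "connected_in m A" "A \<subseteq> S" "adj_closed m S A"
  shows "A \<in> components m S"
proof -
  obtain u where u: "u \<in> A" using assms(1) unfolding connected_in_def by blast
  have "reach m S u w \<longleftrightarrow> w \<in> A" for w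
  proof
    assume "reach m S u w"
    then show "w \<in> A" by (rule reach_adj_closed[OF _ u assms(3)])
  next
    assume "w \<in> A"
    then have "reach m A u w" using u assms(1) unfolding connected_in_def by blast
    then show "reach m S u w" using assms(2) by (rule reach_mono)
  qed
  then have "A = {w. reach m S u w}" by blast
  moreover have "u \<in> S" using u assms(2) by blast
  ultimately show ?thesis unfolding components_def by blast
qed

lemma finite_components: "finite S \<Longrightarrow> finite (components m S)"
proof -
  assume "finite S"
  moreover have "components m S \<subseteq> Pow S" using component_subset by blast
  ultimately show ?thesis by (simp add: finite_subset)
qed

lemma components_cong:
  assumes "\<And>x y. x \<in> S \<Longrightarrow> y \<in> S \<Longrightarrow> m x y = m' x y"
  shows "components m S = components m' S"
  unfolding components_def by (simp add: reach_cong[of S m m', OF assms])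

section \<open>Paths and cycles\<close>

lemma path_connected:
  assumes "sym_mult m" "successively (adj m) ps" "ps \<noteq> []"
  shows "connected_in m (set ps)"
proof -
  have "\<forall>w\<in>set ps. reach m (set ps) (hd ps) w"
    using assms(2,3)
  proof (induction ps)
    case (Cons a ps)
    show ?case
    proof (cases "ps = []")
      case False
      have edge: "adj m a (hd ps)" and IH: "\<forall>w\<in>set ps. reach m (set ps) (hd ps) w"
        using Cons False by (simp_all add: successively_Cons)
      have "reach m (set (a # ps)) a (hd ps)" using edge False by (intro reach_edge) auto
      moreover have "reach m (set (a # ps)) (hd ps) w" if "w \<in> set ps" for w
        using IH that reach_mono[of m "set ps" "hd ps" w "set (a # ps)"] by auto
      ultimately show ?thesis by (auto intro: reach_trans)
    qed simp
  qed simp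
  then show ?thesis using assms(1,3) by (intro connected_in_if_reach_from) auto
qed

lemma reach_imp_path:
  assumes "reach m A u w" "u \<in> A"
  shows "\<exists>ps. ps \<noteq> [] \<and> hd ps = u \<and> last ps = w \<and> set ps \<subseteq> A \<and> distinct ps
              \<and> successively (adj m) ps"
  using assms(1) unfolding reach_def
proof (induction rule: rtranclp_induct)
  case base
  show ?case using assms(2) by (intro exI[of _ "[u]"]) simp
next
  case (step y z)
  obtain ps where ps: "ps \<noteq> []" "hd ps = u" "last ps = y" "set ps \<subseteq> A" "distinct ps"
      "successively (adj m) ps"
    using step.IH by blast
  have "z \<in> A" "adj m y z" using step.hyps(2) by simp_all
  show ?case
  proof (cases "z \<in> set ps")
    case True
    \<comment> \<open>cut the path at its earlier visit of z\<close>
    then obtain as bs where ps_split: "ps = as @ z # bs" by (meson split_list)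
    then have "successively (adj m) (as @ [z])"
      using ps(6) successively_append_iff[of _ "as @ [z]" bs] by simp
    moreover have "hd (as @ [z]) = u" using ps(2) ps_split by (cases as) auto
    ultimately show ?thesis using ps ps_split by (intro exI[of _ "as @ [z]"]) auto
  next
    case False
    have "successively (adj m) (ps @ [z])"
      using ps(1,3,6) \<open>adj m y z\<close> by (simp add: successively_append_iff)
    then show ?thesis using ps False \<open>z \<in> A\<close> by (intro exI[of _ "ps @ [z]"]) simp
  qed
qed

lemma cyclic_adj_iff_successively:
  assumes "xs \<noteq> []"
  shows "(\<forall>i<length xs. R (xs ! i) (xs ! ((i + 1) mod length xs)))
           \<longleftrightarrow> successively R xs \<and> R (last xs) (hd xs)"
proof -
  define n where "n = length xs"
  have n: "0 < n" using assms unfolding n_def by simp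
  have ends: "last xs = xs ! (n - 1)" "hd xs = xs ! 0"
    using assms unfolding n_def by (simp_all add: last_conv_nth hd_conv_nth)
  have "(\<forall>i<n. R (xs ! i) (xs ! ((i + 1) mod n)))
          \<longleftrightarrow> (\<forall>i. Suc i < n \<longrightarrow> R (xs ! i) (xs ! Suc i)) \<and> R (xs ! (n - 1)) (xs ! 0)"
  proof safe
    fix i assume "\<forall>i<n. R (xs ! i) (xs ! ((i + 1) mod n))" "Suc i < n"
    then show "R (xs ! i) (xs ! Suc i)" by (metis Suc_eq_plus1 Suc_lessD mod_less)
  next
    assume "\<forall>i<n. R (xs ! i) (xs ! ((i + 1) mod n))"
    then show "R (xs ! (n - 1)) (xs ! 0)" using n by (metis Suc_pred' diff_less less_one mod_self Suc_eq_plus1)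
  next
    fix i assume R: "\<forall>i. Suc i < n \<longrightarrow> R (xs ! i) (xs ! Suc i)" "R (xs ! (n - 1)) (xs ! 0)"
      and "i < n"
    show "R (xs ! i) (xs ! ((i + 1) mod n))"
    proof (cases "Suc i < n")
      case False
      then have "i + 1 = n" using \<open>i < n\<close> by simp
      then have "i = n - 1" "(i + 1) mod n = 0" by auto
      then show ?thesis using R(2) by simp
    qed (use R(1) in simp)
  qed
  then show ?thesis unfolding n_def[symmetric] ends successively_conv_nth .
qed

lemma cycle_path:
  assumes "sym_mult m" "is_cycle m S xs"
  shows "2 \<le> length xs" "successively (adj m) xs" "adj m (last xs) (hd xs)"
proof -
  have "2 \<le> length xs \<and> successively (adj m) xs \<and> adj m (last xs) (hd xs)"
  proof (cases "length xs = 2")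
    case True
    then obtain a b where "xs = [a, b]" by (auto simp: numeral_2_eq_2 length_Suc_conv)
    with True assms show ?thesis by (auto simp: is_cycle_def adj_def sym_mult_def)
  next
    case False
    then have "3 \<le> length xs" "\<forall>i<length xs. adj m (xs ! i) (xs ! ((i + 1) mod length xs))"
      using assms(2) unfolding is_cycle_def by auto
    moreover have "xs \<noteq> []" using \<open>3 \<le> length xs\<close> by auto
    ultimately show ?thesis using cyclic_adj_iff_successively[of xs "adj m"] by auto
  qed
  then show "2 \<le> length xs" "successively (adj m) xs" "adj m (last xs) (hd xs)" by auto
qed

lemma cycle_of_path:
  assumes "distinct xs" "3 \<le> length xs" "successively (adj m) xs" "adj m (last xs) (hd xs)"
    "set xs \<subseteq> S"
  shows "is_cycle m S xs"
proof -
  have "xs \<noteq> []" using assms(2) by auto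
  then have "\<forall>i<length xs. adj m (xs ! i) (xs ! ((i + 1) mod length xs))"
    using assms(3,4) cyclic_adj_iff_successively[of xs "adj m"] by blast
  then show ?thesis using assms(1,2,5) unfolding is_cycle_def by blast
qed

lemma is_cycle_set_subset: "is_cycle m S xs \<Longrightarrow> set xs \<subseteq> S"
  unfolding is_cycle_def by blast

lemma is_cycle_mono: "is_cycle m S xs \<Longrightarrow> set xs \<subseteq> T \<Longrightarrow> is_cycle m T xs"
  unfolding is_cycle_def by auto

lemma is_cycle_cong:
  assumes "\<And>x y. x \<in> set xs \<Longrightarrow> y \<in> set xs \<Longrightarrow> m x y = m' x y"
  shows "is_cycle m S xs \<longleftrightarrow> is_cycle m' S xs"
proof -
  have "m (xs ! i) (xs ! ((i + 1) mod length xs)) = m' (xs ! i) (xs ! ((i + 1) mod length xs))"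
    if "i < length xs" for i
  proof -
    have "0 < length xs" using that by arith
    then have "(i + 1) mod length xs < length xs" by (rule mod_less_divisor)
    then show ?thesis using that by (intro assms nth_mem)
  qed
  moreover have "m (xs ! 0) (xs ! 1) = m' (xs ! 0) (xs ! 1)" if "length xs = 2"
    using that by (intro assms nth_mem) auto
  ultimately show ?thesis unfolding is_cycle_def adj_def by auto
qed

lemma cycle_connected: "sym_mult m \<Longrightarrow> is_cycle m S xs \<Longrightarrow> connected_in m (set xs)"
  using cycle_path[of m S xs] by (intro path_connected) auto

lemma cycle_remove_vertex_connected:
  assumes "sym_mult m" "is_cycle m S xs" "w \<in> set xs"
  shows "connected_in m (set xs - {w})"
proof -
  obtain as bs where xs: "xs = as @ w # bs" using split_list assms(3) by metis
  have "distinct xs" using assms(2) unfolding is_cycle_def by blast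
  then have "set xs - {w} = set (bs @ as)" unfolding xs by auto
  moreover have "bs @ as \<noteq> []" using cycle_path(1)[OF assms(1,2)] xs by auto
  moreover have "successively (adj m) (bs @ as)"
  proof -
    have "successively (adj m) as" "successively (adj m) bs"
      using cycle_path(2)[OF assms(1,2)] unfolding xs
      by (auto simp: successively_append_iff successively_Cons)
    moreover have "adj m (last bs) (hd as)" if "as \<noteq> []" "bs \<noteq> []"
      using cycle_path(3)[OF assms(1,2)] that unfolding xs by simp
    ultimately show ?thesis by (auto simp: successively_append_iff)
  qed
  ultimately show ?thesis using path_connected[OF assms(1)] by metis
qed

lemma cycle_disjoint_acyclic_component:
  assumes "sym_mult m" "K \<in> components m S" "acyclic_in m K" "is_cycle m S xs"
  shows "set xs \<inter> K = {}"
proof (rule ccontr)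
  assume "set xs \<inter> K \<noteq> {}"
  then obtain x where x: "x \<in> set xs" "x \<in> K" by blast
  have "set xs \<subseteq> S" using assms(4) unfolding is_cycle_def by blast
  then have "set xs \<subseteq> K"
    using connected_subset_component[OF assms(1) cycle_connected[OF assms(1,4)] _ assms(2) x]
    by blast
  then have "is_cycle m K xs" by (rule is_cycle_mono[OF assms(4)])
  with assms(3) show False unfolding acyclic_in_def by blast
qed

section \<open>Cliques, trees and solutions\<close>

lemma acyclic_in_cong:
  assumes "\<And>x y. x \<in> C \<Longrightarrow> y \<in> C \<Longrightarrow> m x y = m' x y"
  shows "acyclic_in m C \<longleftrightarrow> acyclic_in m' C"
proof -
  have "is_cycle m C xs \<longleftrightarrow> is_cycle m' C xs" for xs
  proof (cases "set xs \<subseteq> C")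
    case True
    then show ?thesis using assms by (intro is_cycle_cong) blast
  qed (auto simp: is_cycle_def)
  then show ?thesis unfolding acyclic_in_def by blast
qed

lemma clique_or_tree_cong:
  assumes "\<And>x y. x \<in> C \<Longrightarrow> y \<in> C \<Longrightarrow> m x y = m' x y"
  shows "clique_or_tree m C \<longleftrightarrow> clique_or_tree m' C"
  unfolding clique_or_tree_def is_tree_def is_clique_def
  using assms connected_in_cong[of C m m'] acyclic_in_cong[of C m m'] by simp

lemma clique_or_tree_connected_subset:
  assumes "clique_or_tree m K" "D \<subseteq> K" "connected_in m D"
  shows "clique_or_tree m D"
proof -
  have "is_cycle m K xs" if "is_cycle m D xs" for xs
    using is_cycle_mono[OF that] is_cycle_set_subset[OF that] assms(2) by blast
  then have "acyclic_in m D" if "acyclic_in m K"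
    using that unfolding acyclic_in_def by blast
  then show ?thesis
    using assms unfolding clique_or_tree_def is_tree_def is_clique_def by blast
qed

lemma feasible_cong_deleted_vertex:
  assumes "\<And>x y. x \<noteq> v \<Longrightarrow> y \<noteq> v \<Longrightarrow> m x y = m' x y" "v \<in> X"
  shows "feasible V m k X \<longleftrightarrow> feasible V m' k X"
proof -
  have agree: "m x y = m' x y" if "x \<in> V - X" "y \<in> V - X" for x y
    using that assms(2) by (intro assms(1)) auto
  then have "components m (V - X) = components m' (V - X)" by (rule components_cong)
  moreover have "clique_or_tree m C \<longleftrightarrow> clique_or_tree m' C" if "C \<in> components m (V - X)" for C
    using that component_subset agree by (intro clique_or_tree_cong) blast
  ultimately show ?thesis unfolding feasible_iff by simp
qed

lemma card_le_card_of_disjoint_hitting: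
  assumes "finite X" "\<And>a. a \<in> A \<Longrightarrow> P a \<inter> X \<noteq> {}"
    "\<And>a b. a \<in> A \<Longrightarrow> b \<in> A \<Longrightarrow> a \<noteq> b \<Longrightarrow> P a \<inter> P b = {}"
  shows "card A \<le> card (X \<inter> \<Union>(P ` A))"
proof -
  have "\<forall>a\<in>A. \<exists>x. x \<in> P a \<inter> X" using assms(2) by blast
  then obtain g where g: "\<forall>a\<in>A. g a \<in> P a \<inter> X" by (rule bchoice[THEN exE])
  have "inj_on g A"
  proof (rule inj_onI)
    fix a b assume ab: "a \<in> A" "b \<in> A" "g a = g b"
    then have "g a \<in> P a \<inter> P b" using g by (metis IntD1 IntI)
    then show "a = b" using assms(3)[OF ab(1,2)] by blast
  qed
  moreover have "g ` A \<subseteq> X \<inter> \<Union>(P ` A)" using g by blast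
  ultimately show ?thesis using assms(1) by (intro card_inj_on_le) auto
qed

lemma clique_meets_one_component:
  assumes sym: "sym_mult m" and C: "C1 \<in> components m T" "C2 \<in> components m T"
    and agree: "\<And>x y. x \<in> T \<Longrightarrow> y \<in> T \<Longrightarrow> m'' x y = m x y"
    and K: "is_clique m'' K" "C1 \<inter> K \<noteq> {}" "C2 \<inter> K \<noteq> {}"
  shows "C1 = C2"
proof -
  obtain x1 x2 where x: "x1 \<in> C1" "x1 \<in> K" "x2 \<in> C2" "x2 \<in> K" using K(2,3) by blast
  then have T: "x1 \<in> T" "x2 \<in> T" using C component_subset by blast+
  have "x2 \<in> C1"
  proof (cases "x1 = x2")
    case False
    then have "m x1 x2 = 1" using K(1) x agree[OF T] unfolding is_clique_def by auto
    then have "adj m x1 x2" unfolding adj_def by simp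
    then show ?thesis
      using component_adj_closed[OF sym C(1)] x(1) T(2) unfolding adj_closed_def by blast
  qed (use x in simp)
  then show ?thesis using components_disjoint[OF sym C] x(3) by blast
qed

lemma clique_component_card_bound:
  assumes sym: "sym_mult m" "sym_mult m''"
    and F: "F \<subseteq> components m T" "T \<subseteq> V"
    and agree: "\<And>x y. x \<in> T \<Longrightarrow> y \<in> T \<Longrightarrow> m'' x y = m x y"
    and nbr: "\<And>C. C \<in> F \<Longrightarrow> \<exists>u\<in>C. adj m'' v u"
    and K: "K \<in> components m'' (V - X)" "v \<in> K" "is_clique m'' K"
    and X: "finite X"
  shows "card F \<le> card (X \<inter> \<Union>F) + 1"
proof -
  define F1 where "F1 = {C \<in> F. C \<inter> K \<noteq> {}}"
  have F1_eq: "C1 = C2" if "C1 \<in> F1" "C2 \<in> F1" for C1 C2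
    using that clique_meets_one_component[OF sym(1) _ _ agree K(3)] F(1) unfolding F1_def by blast
  have "card F1 \<le> 1"
  proof (cases "F1 = {}")
    case False
    then obtain C where "F1 \<subseteq> {C}" using F1_eq by blast
    then show ?thesis using card_mono[of "{C}" F1] by simp
  qed simp
  have hit: "C \<inter> X \<noteq> {}" if "C \<in> F - F1" for C
  proof
    assume CX: "C \<inter> X = {}"
    have "C \<in> F" using that by blast
    then have C: "C \<in> components m T" using F(1) by blast
    obtain u where u: "u \<in> C" "adj m'' v u" using nbr[OF \<open>C \<in> F\<close>] by blast
    then have "u \<in> V - X" using CX F(2) component_subset[OF C] by blast
    then have "u \<in> K"
      using component_adj_closed[OF sym(2) K(1)] K(2) u(2) unfolding adj_closed_def by blast
    then show False using that u(1) unfolding F1_def by blast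
  qed
  have "card (F - F1) \<le> card (X \<inter> \<Union>(F - F1))"
  proof -
    have "C \<inter> D = {}" if "C \<in> F - F1" "D \<in> F - F1" "C \<noteq> D" for C D
      using that components_disjoint[OF sym(1), of C T D] F(1) by blast
    then show ?thesis using card_le_card_of_disjoint_hitting[of X "F - F1" "\<lambda>C. C"] X hit by simp
  qed
  also have "\<dots> \<le> card (X \<inter> \<Union>F)" using X by (intro card_mono) auto
  finally have "card (F - F1) \<le> card (X \<inter> \<Union>F)" .
  moreover have "F = F1 \<union> (F - F1)" unfolding F1_def by blast
  then have "card F \<le> card F1 + card (F - F1)" by (metis card_Un_le)
  ultimately show ?thesis using \<open>card F1 \<le> 1\<close> by linarith
qed

section \<open>The reduction\<close>

locale double_edge_reduction =
  fixes V :: "'a set" and m :: "'a \<Rightarrow> 'a \<Rightarrow> nat" and k :: nat and v :: 'a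
    and B B' :: "'a set" and Cs :: "'a set set" and f :: "'a set \<Rightarrow> 'a"
  assumes graph: "mgraph V m"
    and v_in_V: "v \<in> V"
    and B_sub: "B \<subseteq> V - {v}"
    and no_cycle: "\<not> cycle_through V m B v"
    and many_trees: "4 * k \<le> card (C_tree V m B v)"
    and B'_sub: "B' \<subseteq> B" and B'_ne: "B' \<noteq> {}" and B'_card: "card B' \<le> k"
    and Cs_sub: "Cs \<subseteq> C_tree V m B v"
    and Cs_B_nbrs: "\<And>C b x. C \<in> Cs \<Longrightarrow> b \<in> B \<Longrightarrow> x \<in> C \<Longrightarrow> adj m b x \<Longrightarrow> b \<in> B'"
    and f_in_B': "\<And>C. C \<in> Cs \<Longrightarrow> f C \<in> B'"
    and f_adj: "\<And>C. C \<in> Cs \<Longrightarrow> \<exists>x\<in>C. adj m (f C) x"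
    and f_fibre: "\<And>b. b \<in> B' \<Longrightarrow> card {C \<in> Cs. f C = b} = 2"
begin

abbreviation "m' \<equiv> reduced m v B' Cs"
abbreviation "T0 \<equiv> V - {v} - B"
abbreviation "Z \<equiv> \<Union>Cs"
abbreviation "CT \<equiv> C_tree V m B v"

lemma sym_m: "sym_mult m"
  using graph unfolding mgraph_def sym_mult_def by blast

lemma sym_m': "sym_mult m'"
  using sym_m unfolding sym_mult_def reduced_def by auto

lemma finite_V: "finite V"
  using graph unfolding mgraph_def by blast

lemma adj_in_V: "adj m x y \<Longrightarrow> y \<in> V"
  using graph unfolding mgraph_def adj_def by blast

lemma B'_in_V: "B' \<subseteq> V - {v}"
  using B'_sub B_sub by blast

lemma finite_B': "finite B'"
  using B'_in_V finite_V finite_subset by blast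

lemma k_pos: "1 \<le> k"
  using finite_B' B'_ne B'_card card_0_eq[of B'] by linarith

lemma C_tree_D:
  assumes "C \<in> CT"
  shows "C \<in> components m T0" "C \<subseteq> T0" "is_tree m C" "\<exists>u\<in>C. adj m v u"
  using assms component_subset unfolding C_tree_def nbhd_def by auto

lemma finite_CT: "finite CT"
proof -
  have "CT \<subseteq> components m T0" unfolding C_tree_def by blast
  moreover have "finite (components m T0)" using finite_V by (intro finite_components) simp
  ultimately show ?thesis by (rule finite_subset)
qed

lemma finite_Cs: "finite Cs"
  using Cs_sub finite_CT by (rule finite_subset)

lemma Z_sub: "Z \<subseteq> T0"
  using Cs_sub C_tree_D(2) by blast

lemma C_tree_disjoint: "C1 \<in> CT \<Longrightarrow> C2 \<in> CT \<Longrightarrow> x \<in> C1 \<Longrightarrow> x \<in> C2 \<Longrightarrow> C1 = C2"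
  using components_disjoint[OF sym_m] C_tree_D(1) by blast

lemma card_Cs: "card Cs = 2 * card B'"
proof -
  have "Cs = (\<Union>b\<in>B'. {C \<in> Cs. f C = b})" using f_in_B' by auto
  also have "card \<dots> = (\<Sum>b\<in>B'. card {C \<in> Cs. f C = b})"
    by (rule card_UN_disjoint) (use finite_B' finite_Cs in auto)
  also have "\<dots> = 2 * card B'" using f_fibre by simp
  finally show ?thesis .
qed

lemma Cs_adj:
  assumes "C \<in> Cs" "x \<in> C" "adj m x y"
  shows "y \<in> C \<or> y = v \<or> y \<in> B'"
proof -
  have "y \<in> V" using adj_in_V assms(3) .
  moreover have "y \<in> C" if "y \<in> T0"
  proof -
    have "C \<in> components m T0" using Cs_sub assms(1) C_tree_D(1) by blast
    then show ?thesis
      using component_adj_closed[OF sym_m] assms(2,3) that unfolding adj_closed_def by blast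
  qed
  moreover have "y \<in> B'" if "y \<in> B"
    using Cs_B_nbrs[OF assms(1) that assms(2)] adj_sym[OF sym_m assms(3)] .
  ultimately show ?thesis by blast
qed

lemma reduced_off_v: "x \<noteq> v \<Longrightarrow> y \<noteq> v \<Longrightarrow> m' x y = m x y"
  unfolding reduced_def by simp

lemma reduced_agree_on:
  assumes "A \<inter> B' = {}" "v \<notin> A \<or> A \<inter> Z = {}" "x \<in> A" "y \<in> A"
  shows "m' x y = m x y"
  using assms unfolding reduced_def by auto

lemma reduced_v_Z: "z \<in> Z \<Longrightarrow> \<not> adj m' v z"
  using Z_sub B'_sub unfolding reduced_def adj_def by auto

lemma reduced_v_B': "b \<in> B' \<Longrightarrow> 2 \<le> m' v b"
  using Z_sub B'_sub unfolding reduced_def by auto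

lemma adj_reducedD: "adj m' x y \<Longrightarrow> adj m x y \<or> (x = v \<and> y \<in> B') \<or> (y = v \<and> x \<in> B')"
  unfolding reduced_def adj_def by (auto split: if_splits)

lemma adj_reducedI: "adj m x y \<Longrightarrow> adj m' x y \<or> (x = v \<and> y \<in> Z) \<or> (y = v \<and> x \<in> Z)"
  unfolding reduced_def adj_def by (auto split: if_splits)

lemma Cs_adj_reduced:
  assumes "C \<in> Cs" "x \<in> C" "adj m' x y"
  shows "y \<in> C \<or> y \<in> B'"
proof -
  have "x \<noteq> v" "x \<notin> B'" using assms(1,2) Z_sub B'_sub by blast+
  then have "adj m x y" using adj_reducedD[OF assms(3)] by blast
  moreover have "y \<noteq> v"
    using assms(1,2,3) reduced_v_Z adj_sym[OF sym_m'] by blast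
  ultimately show ?thesis using Cs_adj[OF assms(1,2)] by blast
qed

lemma C_tree_nbr_reduced:
  assumes "C \<in> CT" "C \<notin> Cs"
  shows "\<exists>u\<in>C. adj m' v u"
proof -
  obtain u where u: "u \<in> C" "adj m v u" using C_tree_D(4)[OF assms(1)] by blast
  have "u \<notin> Z"
  proof
    assume "u \<in> Z"
    then obtain C' where "C' \<in> Cs" "u \<in> C'" by blast
    then have "C' = C" using C_tree_disjoint[OF _ assms(1) _ u(1)] Cs_sub by blast
    then show False using assms(2) \<open>C' \<in> Cs\<close> by blast
  qed
  moreover have "u \<noteq> v" using C_tree_D(2)[OF assms(1)] u(1) by blast
  ultimately show ?thesis using adj_reducedI[OF u(2)] u(1) by blast
qed

lemma v_component_not_clique:
  assumes "X \<subseteq> V" "card X \<le> k" "v \<notin> X"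
  shows "\<not> is_clique m {w. reach m (V - X) v w}"
proof
  assume clique: "is_clique m {w. reach m (V - X) v w}"
  have "finite X" using assms(1) finite_V finite_subset by blast
  have "card CT \<le> card (X \<inter> \<Union>CT) + 1"
  proof (rule clique_component_card_bound[OF sym_m sym_m, where T = T0 and V = V])
    show "CT \<subseteq> components m T0" using C_tree_D(1) by blast
    show "\<exists>u\<in>C. adj m v u" if "C \<in> CT" for C using C_tree_D(4) that .
    show "{w. reach m (V - X) v w} \<in> components m (V - X)"
      using v_in_V assms(3) by (intro component_of_in_components) blast
  qed (use clique \<open>finite X\<close> in auto)
  moreover have "card (X \<inter> \<Union>CT) \<le> card X" using \<open>finite X\<close> by (intro card_mono) auto
  ultimately show False using assms(2) many_trees k_pos by linarith
qed

lemma v_component_not_clique_reduced: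
  assumes "X \<subseteq> V" "card X \<le> k" "v \<notin> X" "B' \<subseteq> X"
  shows "\<not> is_clique m' {w. reach m' (V - X) v w}"
proof
  assume clique: "is_clique m' {w. reach m' (V - X) v w}"
  define F where "F = CT - Cs"
  have "finite X" using assms(1) finite_V finite_subset by blast
  have "card F \<le> card (X \<inter> \<Union>F) + 1"
  proof (rule clique_component_card_bound[OF sym_m sym_m', where T = T0 and V = V])
    show "F \<subseteq> components m T0" unfolding F_def using C_tree_D(1) by blast
    show "m' x y = m x y" if "x \<in> T0" "y \<in> T0" for x y using that reduced_off_v by blast
    show "\<exists>u\<in>C. adj m' v u" if "C \<in> F" for C
      using that C_tree_nbr_reduced unfolding F_def by blast
    show "{w. reach m' (V - X) v w} \<in> components m' (V - X)"
      using v_in_V assms(3) by (intro component_of_in_components) blast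
  qed (use clique \<open>finite X\<close> in auto)
  moreover have "card B' + card (X \<inter> \<Union>F) \<le> card X"
  proof -
    have "B' \<inter> (X \<inter> \<Union>F) = {}" using B'_sub C_tree_D(2) unfolding F_def by blast
    then have "card B' + card (X \<inter> \<Union>F) = card (B' \<union> (X \<inter> \<Union>F))"
      using \<open>finite X\<close> finite_B' by (intro card_Un_disjoint[symmetric]) auto
    also have "\<dots> \<le> card X" using \<open>finite X\<close> assms(4) by (intro card_mono) auto
    finally show ?thesis .
  qed
  moreover have "card F + card Cs = card CT"
    using card_Diff_subset[OF finite_Cs Cs_sub] card_mono[OF finite_CT Cs_sub]
    unfolding F_def by simp
  ultimately show False using card_Cs many_trees assms(2) k_pos B'_card by linarith
qed

lemma fibre_cycle:
  assumes C: "C1 \<in> Cs" "C2 \<in> Cs" "C1 \<noteq> C2" and b: "f C1 = b" "f C2 = b"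
  shows "\<exists>xs. is_cycle m (insert v (insert b (C1 \<union> C2))) xs \<and> v \<in> set xs"
proof -
  have CT: "C1 \<in> CT" "C2 \<in> CT" using C Cs_sub by blast+
  have "b \<in> B'" using f_in_B' C(1) b(1) by blast
  obtain x1 x2 where x: "x1 \<in> C1" "adj m v x1" "x2 \<in> C2" "adj m v x2"
    using C_tree_D(4) CT by blast
  obtain y1 y2 where y: "y1 \<in> C1" "adj m b y1" "y2 \<in> C2" "adj m b y2"
    using f_adj[OF C(1), unfolded b(1)] f_adj[OF C(2), unfolded b(2)] by blast
  have "connected_in m C1" "connected_in m C2"
    using component_connected[OF sym_m C_tree_D(1)] CT by blast+
  then have "reach m C1 x1 y1" "reach m C2 y2 x2" using x y unfolding connected_in_def by blast+
  then obtain p1 p2 where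
    p1: "p1 \<noteq> []" "hd p1 = x1" "last p1 = y1" "set p1 \<subseteq> C1" "distinct p1" "successively (adj m) p1"
    and
    p2: "p2 \<noteq> []" "hd p2 = y2" "last p2 = x2" "set p2 \<subseteq> C2" "distinct p2" "successively (adj m) p2"
    using reach_imp_path x(1) y(3) by meson
  define xs where "xs = v # p1 @ b # p2"
  have "C1 \<inter> C2 = {}" using C_tree_disjoint CT C(3) by blast
  moreover have "v \<notin> C1 \<union> C2" "b \<notin> C1 \<union> C2" "v \<noteq> b"
    using C_tree_D(2) CT \<open>b \<in> B'\<close> B'_sub B_sub by blast+
  ultimately have "distinct xs" unfolding xs_def using p1 p2 by auto
  moreover have "3 \<le> length xs" unfolding xs_def using p1(1) p2(1) by (cases p1; cases p2) auto
  moreover have "successively (adj m) xs"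
    unfolding xs_def using p1 p2 x y adj_sym[OF sym_m y(2)]
    by (auto simp: successively_Cons successively_append_iff)
  moreover have "adj m (last xs) (hd xs)"
    unfolding xs_def using p2 adj_sym[OF sym_m x(4)] by simp
  moreover have "set xs \<subseteq> insert v (insert b (C1 \<union> C2))" unfolding xs_def using p1 p2 by auto
  ultimately have "is_cycle m (insert v (insert b (C1 \<union> C2))) xs" by (rule cycle_of_path)
  then show ?thesis unfolding xs_def by auto
qed

lemma solution_hits_fibre:
  assumes feas: "feasible V m k X" and "v \<notin> X" "b \<in> B'" "b \<notin> X"
  shows "\<exists>C\<in>Cs. f C = b \<and> C \<inter> X \<noteq> {}"
proof (rule ccontr)
  assume miss: "\<not> ?thesis"
  obtain C1 C2 where fibre: "{C \<in> Cs. f C = b} = {C1, C2}" "C1 \<noteq> C2"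
    using f_fibre[OF assms(3)] card_2_iff by metis
  then have C: "C1 \<in> Cs" "C2 \<in> Cs" "f C1 = b" "f C2 = b" by blast+
  with miss have "C1 \<inter> X = {}" "C2 \<inter> X = {}" by blast+
  moreover have "C1 \<subseteq> V" "C2 \<subseteq> V" using C Z_sub by blast+
  moreover have "b \<in> V" using assms(3) B'_in_V by blast
  ultimately have sub: "insert v (insert b (C1 \<union> C2)) \<subseteq> V - X"
    using v_in_V assms(2,4) by blast
  obtain xs where xs: "is_cycle m (insert v (insert b (C1 \<union> C2))) xs" "v \<in> set xs"
    using fibre_cycle[OF C(1,2) fibre(2) C(3,4)] by blast
  define K where "K = {w. reach m (V - X) v w}"
  have K: "K \<in> components m (V - X)"
    unfolding K_def using v_in_V assms(2) by (intro component_of_in_components) blast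
  have "X \<subseteq> V" "card X \<le> k" using feas unfolding feasible_def by blast+
  then have "is_tree m K"
    using feas K v_component_not_clique assms(2) unfolding feasible_iff clique_or_tree_def K_def
    by blast
  moreover have "is_cycle m (V - X) xs"
    using is_cycle_mono[OF xs(1)] is_cycle_set_subset[OF xs(1)] sub by blast
  ultimately have "set xs \<inter> K = {}"
    using cycle_disjoint_acyclic_component[OF sym_m K] unfolding is_tree_def by blast
  moreover have "v \<in> K" unfolding K_def by simp
  ultimately show False using xs(2) by blast
qed

lemma card_reduced_solution:
  assumes feas: "feasible V m k X" and "v \<notin> X"
  shows "card ((X - Z) \<union> B') \<le> card X"
proof -
  have "finite X" using feas finite_V rev_finite_subset unfolding feasible_def by blast
  define P where "P b = \<Union>{C \<in> Cs. f C = b}" for b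
  have "card (B' - X) \<le> card (X \<inter> \<Union>(P ` (B' - X)))"
  proof (rule card_le_card_of_disjoint_hitting[OF \<open>finite X\<close>])
    show "P b \<inter> X \<noteq> {}" if "b \<in> B' - X" for b
      using solution_hits_fibre[OF feas assms(2)] that unfolding P_def by blast
    show "P b \<inter> P c = {}" if "b \<in> B' - X" "c \<in> B' - X" "b \<noteq> c" for b c
    proof -
      have "C1 = C2" if "C1 \<in> Cs" "C2 \<in> Cs" "x \<in> C1" "x \<in> C2" for C1 C2 x
        using C_tree_disjoint Cs_sub that by blast
      then show ?thesis using that(3) unfolding P_def by blast
    qed
  qed
  also have "\<dots> \<le> card (X \<inter> Z)" using \<open>finite X\<close> unfolding P_def by (intro card_mono) auto
  finally have hits: "card (B' - X) \<le> card (X \<inter> Z)" .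
  have "(X - Z) \<union> B' = (X - Z) \<union> (B' - X)" using B'_sub Z_sub by blast
  then have "card ((X - Z) \<union> B') \<le> card (X - Z) + card (B' - X)" by (metis card_Un_le)
  moreover have "card X = card (X \<inter> Z) + card (X - Z)" using \<open>finite X\<close> by (rule card_Int_Diff)
  ultimately show ?thesis using hits by linarith
qed

lemma Cs_component_reduced:
  assumes "C \<in> Cs" "C \<subseteq> S" "S \<inter> B' = {}"
  shows "C \<in> components m' S"
proof (rule connected_adj_closed_component)
  have "C \<in> CT" using assms(1) Cs_sub by blast
  have "C \<inter> B' = {}" "v \<notin> C" using C_tree_D(2)[OF \<open>C \<in> CT\<close>] B'_sub by blast+
  then have "m x y = m' x y" if "x \<in> C" "y \<in> C" for x y
    using reduced_agree_on that by metis
  then show "connected_in m' C"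
    using component_connected[OF sym_m C_tree_D(1)[OF \<open>C \<in> CT\<close>]] connected_in_cong by blast
  show "adj_closed m' S C"
    using Cs_adj_reduced[OF assms(1)] assms(3) unfolding adj_closed_def by blast
qed (rule assms(2))

lemma reduced_solution_components:
  assumes feas: "feasible V m k X" and D: "D \<in> components m' (V - ((X - Z) \<union> B'))"
  shows "clique_or_tree m' D"
proof -
  let ?S = "V - ((X - Z) \<union> B')"
  have D_sub: "D \<subseteq> ?S" using component_subset D .
  show ?thesis
  proof (cases "\<exists>C\<in>Cs. D \<inter> C \<noteq> {}")
    case True
    then obtain C x where C: "C \<in> Cs" "x \<in> D" "x \<in> C" by blast
    have "C \<subseteq> ?S" using C(1) Z_sub B'_sub by blast
    then have "C \<in> components m' ?S" by (rule Cs_component_reduced[OF C(1)]) blast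
    then have "D = C" using components_disjoint[OF sym_m' D] C(2,3) by blast
    moreover have "clique_or_tree m C"
      using C_tree_D(3) Cs_sub C(1) unfolding clique_or_tree_def by blast
    moreover have "v \<notin> C" using C(1) Z_sub by blast
    then have "m x y = m' x y" if "x \<in> C" "y \<in> C" for x y
      using reduced_off_v[of x y] that by metis
    ultimately show ?thesis using clique_or_tree_cong by blast
  next
    case False
    then have "D \<inter> Z = {}" by blast
    moreover have "D \<inter> B' = {}" using D_sub by blast
    ultimately have agree: "m x y = m' x y" if "x \<in> D" "y \<in> D" for x y
      using reduced_agree_on[of D x y] that by simp
    have "connected_in m D"
      using component_connected[OF sym_m' D] connected_in_cong agree by blast
    obtain u where "u \<in> D" using \<open>connected_in m D\<close> unfolding connected_in_def by blast
    have "D \<subseteq> V - X" using D_sub \<open>D \<inter> Z = {}\<close> by blast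
    define K where "K = {w. reach m (V - X) u w}"
    have K: "K \<in> components m (V - X)"
      unfolding K_def using \<open>u \<in> D\<close> \<open>D \<subseteq> V - X\<close> by (intro component_of_in_components) blast
    then have "D \<subseteq> K"
      using connected_subset_component[OF sym_m \<open>connected_in m D\<close> \<open>D \<subseteq> V - X\<close>] \<open>u \<in> D\<close>
      unfolding K_def by simp
    moreover have "clique_or_tree m K" using feas K unfolding feasible_iff by blast
    ultimately have "clique_or_tree m D"
      using clique_or_tree_connected_subset \<open>connected_in m D\<close> by blast
    then show ?thesis using clique_or_tree_cong agree by blast
  qed
qed

lemma feasible_reduced:
  assumes "feasible V m k X" "v \<notin> X"
  shows "feasible V m' k ((X - Z) \<union> B')"
  using assms card_reduced_solution[OF assms] reduced_solution_components[OF assms(1)] B'_in_V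
  unfolding feasible_iff by auto

lemma B'_sub_reduced_solution:
  assumes feas: "feasible V m' k X" and "v \<notin> X"
  shows "B' \<subseteq> X"
proof
  fix b assume b: "b \<in> B'"
  show "b \<in> X"
  proof (rule ccontr)
    assume "b \<notin> X"
    define K where "K = {w. reach m' (V - X) v w}"
    have K: "K \<in> components m' (V - X)" "v \<in> K"
      unfolding K_def using v_in_V assms(2) by (auto intro: component_of_in_components)
    have "b \<in> V - X" "b \<noteq> v" using b B'_in_V \<open>b \<notin> X\<close> by blast+
    moreover have "2 \<le> m' v b" using reduced_v_B'[OF b] .
    ultimately have "b \<in> K"
      using component_adj_closed[OF sym_m' K(1)] K(2) unfolding adj_closed_def adj_def by simp
    have "clique_or_tree m' K" using feas K(1) unfolding feasible_iff by blast
    moreover have "\<not> is_clique m' K"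
      using K(2) \<open>b \<in> K\<close> \<open>b \<noteq> v\<close> \<open>2 \<le> m' v b\<close> unfolding is_clique_def by force
    moreover have "is_cycle m' K [v, b]"
      using K(2) \<open>b \<in> K\<close> \<open>b \<noteq> v\<close> \<open>2 \<le> m' v b\<close> unfolding is_cycle_def by simp
    ultimately show False unfolding clique_or_tree_def is_tree_def acyclic_in_def by blast
  qed
qed

lemma v_component_reduced_tree:
  assumes feas: "feasible V m' k X" and "v \<notin> X"
  shows "is_tree m' {w. reach m' (V - X) v w}"
proof -
  have "{w. reach m' (V - X) v w} \<in> components m' (V - X)"
    using v_in_V assms(2) by (intro component_of_in_components) blast
  then have "clique_or_tree m' {w. reach m' (V - X) v w}" using feas unfolding feasible_iff by blast
  moreover have "X \<subseteq> V" "card X \<le> k" using feas unfolding feasible_def by blast+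
  ultimately show ?thesis
    using v_component_not_clique_reduced assms(2) B'_sub_reduced_solution[OF assms]
    unfolding clique_or_tree_def by blast
qed

lemma cycle_avoiding_B'_avoids_Z:
  assumes cyc: "is_cycle m S xs" and "set xs \<inter> B' = {}"
  shows "set xs \<inter> Z = {}"
proof (rule ccontr)
  assume "set xs \<inter> Z \<noteq> {}"
  then obtain C y where C: "C \<in> Cs" "y \<in> C" "y \<in> set xs" by blast
  have C_sub: "C \<subseteq> T0" using C(1) Z_sub by blast
  define P where "P = set xs - {v}"
  have "connected_in m P"
  proof (cases "v \<in> set xs")
    case True
    then show ?thesis unfolding P_def by (rule cycle_remove_vertex_connected[OF sym_m cyc])
  next
    case False
    then show ?thesis unfolding P_def using cycle_connected[OF sym_m cyc] by simp
  qed
  moreover have "adj_closed m P C"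
    using Cs_adj[OF C(1)] assms(2) unfolding adj_closed_def P_def by blast
  moreover have "y \<in> P" using C C_sub unfolding P_def by blast
  ultimately have "P \<subseteq> C"
    using reach_adj_closed[of m P y _ C] C(2) unfolding connected_in_def by blast
  then have xs_sub: "set xs \<subseteq> insert v C" unfolding P_def by blast
  show False
  proof (cases "v \<in> set xs")
    case True
    have "set xs \<subseteq> V - B" using xs_sub C_sub v_in_V B_sub by blast
    then have "is_cycle m (V - B) xs" by (rule is_cycle_mono[OF cyc])
    with True no_cycle show False unfolding cycle_through_def by blast
  next
    case False
    then have "is_cycle m C xs" using xs_sub is_cycle_mono[OF cyc] by blast
    moreover have "is_tree m C" using C(1) Cs_sub C_tree_D(3) by blast
    ultimately show False unfolding is_tree_def acyclic_in_def by blast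
  qed
qed

lemma v_component_subset_reduced:
  assumes "v \<notin> X" "B' \<subseteq> X"
  shows "{w. reach m (V - X) v w} \<subseteq> {w. reach m' (V - X) v w} \<union> Z"
proof -
  define K where "K = {w. reach m' (V - X) v w}"
  have K: "K \<in> components m' (V - X)"
    unfolding K_def using v_in_V assms(1) by (auto intro: component_of_in_components)
  have "v \<in> K" unfolding K_def by simp
  have "adj_closed m (V - X) (K \<union> Z)"
    unfolding adj_closed_def
  proof (intro ballI impI)
    fix x y assume x: "x \<in> K \<union> Z" and y: "y \<in> V - X" and "adj m x y"
    show "y \<in> K \<union> Z"
    proof (cases "x \<in> Z")
      case True
      then obtain C where "C \<in> Cs" "x \<in> C" by blast
      then show ?thesis
        using Cs_adj[OF \<open>C \<in> Cs\<close> \<open>x \<in> C\<close> \<open>adj m x y\<close>] \<open>v \<in> K\<close> y assms(2) by blast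
    next
      case False
      then have "x \<in> K" using x by blast
      moreover have "adj m' x y \<Longrightarrow> y \<in> K"
        using component_adj_closed[OF sym_m' K] \<open>x \<in> K\<close> y unfolding adj_closed_def by blast
      ultimately show ?thesis using adj_reducedI[OF \<open>adj m x y\<close>] False \<open>v \<in> K\<close> by blast
    qed
  qed
  then show ?thesis
    unfolding K_def[symmetric]
    using reach_adj_closed[of m "V - X" v _ "K \<union> Z"] \<open>v \<in> K\<close> by blast
qed

lemma v_component_tree:
  assumes feas: "feasible V m' k X" and "v \<notin> X"
  shows "is_tree m {w. reach m (V - X) v w}"
proof -
  define D where "D = {w. reach m (V - X) v w}"
  define K where "K = {w. reach m' (V - X) v w}"
  have B'X: "B' \<subseteq> X" by (rule B'_sub_reduced_solution[OF assms])
  have D: "D \<in> components m (V - X)"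
    unfolding D_def using v_in_V assms(2) by (auto intro: component_of_in_components)
  have K_tree: "is_tree m' K" unfolding K_def by (rule v_component_reduced_tree[OF assms])
  have D_sub: "D \<subseteq> K \<union> Z"
    unfolding D_def K_def by (rule v_component_subset_reduced[OF assms(2) B'X])
  have "\<not> is_cycle m D xs" for xs
  proof
    assume cyc: "is_cycle m D xs"
    have "set xs \<subseteq> V - X" using is_cycle_set_subset[OF cyc] component_subset[OF D] by blast
    then have "set xs \<inter> B' = {}" using B'X by blast
    then have "set xs \<inter> Z = {}" by (rule cycle_avoiding_B'_avoids_Z[OF cyc])
    then have "set xs \<subseteq> K" using is_cycle_set_subset[OF cyc] D_sub by blast
    have "m x y = m' x y" if "x \<in> set xs" "y \<in> set xs" for x y
      using reduced_agree_on[of "set xs" x y] \<open>set xs \<inter> Z = {}\<close> \<open>set xs \<inter> B' = {}\<close> that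
      by simp
    then have "is_cycle m' K xs"
      using is_cycle_cong[of xs m m' K] is_cycle_mono[OF cyc \<open>set xs \<subseteq> K\<close>] by blast
    with K_tree show False unfolding is_tree_def acyclic_in_def by blast
  qed
  then show ?thesis
    using component_connected[OF sym_m D] unfolding D_def is_tree_def acyclic_in_def by blast
qed

lemma feasible_of_reduced:
  assumes feas: "feasible V m' k X" and "v \<notin> X"
  shows "feasible V m k X"
proof -
  have B'X: "B' \<subseteq> X" by (rule B'_sub_reduced_solution[OF assms])
  have "clique_or_tree m D" if D: "D \<in> components m (V - X)" for D
  proof (cases "v \<in> D")
    case True
    then have "D = {w. reach m (V - X) v w}" by (rule component_eq[OF sym_m D])
    then show ?thesis using v_component_tree[OF assms] unfolding clique_or_tree_def by simp
  next
    case False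
    have "D \<inter> B' = {}" using component_subset[OF D] B'X by blast
    then have agree: "m x y = m' x y" if "x \<in> D" "y \<in> D" for x y
      using reduced_agree_on[of D x y] False that by simp
    have "D \<in> components m' (V - X)"
    proof (rule connected_adj_closed_component)
      show "connected_in m' D" using component_connected[OF sym_m D] connected_in_cong agree by blast
      show "D \<subseteq> V - X" by (rule component_subset[OF D])
      show "adj_closed m' (V - X) D"
        unfolding adj_closed_def
      proof (intro ballI impI)
        fix x y assume "x \<in> D" "y \<in> V - X" "adj m' x y"
        then have "adj m x y" using adj_reducedD False \<open>D \<inter> B' = {}\<close> by blast
        then show "y \<in> D"
          using component_adj_closed[OF sym_m D] \<open>x \<in> D\<close> \<open>y \<in> V - X\<close>
          unfolding adj_closed_def by blast
      qed
    qed
    then have "clique_or_tree m' D" using feas unfolding feasible_iff by blast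
    then show ?thesis using clique_or_tree_cong agree by blast
  qed
  then show ?thesis using feas unfolding feasible_iff by blast
qed

lemma yes_instance_reduced_iff: "yes_instance V m k \<longleftrightarrow> yes_instance V m' k"
proof -
  have off_v: "m x y = m' x y" if "x \<noteq> v" "y \<noteq> v" for x y
    using reduced_off_v that by simp
  have "\<exists>X'. feasible V m' k X'" if "feasible V m k X" for X
  proof (cases "v \<in> X")
    case True
    then show ?thesis
      using that feasible_cong_deleted_vertex[where m = m and m' = m', OF off_v True] by blast
  next
    case False
    then show ?thesis using feasible_reduced[OF that] by blast
  qed
  moreover have "\<exists>X'. feasible V m k X'" if "feasible V m' k X" for X
  proof (cases "v \<in> X")
    case True
    then show ?thesis
      using that feasible_cong_deleted_vertex[where m = m and m' = m', OF off_v True] by blast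
  next
    case False
    then show ?thesis using feasible_of_reduced[OF that] by blast
  qed
  ultimately show ?thesis unfolding yes_instance_def by blast
qed

end

theorem mainTheorem9:
  fixes V :: "'a set" and m :: "'a \<Rightarrow> 'a \<Rightarrow> nat" and k :: nat and v :: 'a
    and B B' :: "'a set" and Cs :: "'a set set"
  assumes graph: "mgraph V m"
    and ls: "large_sparse V m k v"
    and B_sub: "B \<subseteq> V - {v}" and B_card: "card B \<le> 2 * k"
    and no_cycle: "\<not> cycle_through V m B v"
    and many_trees: "card (C_tree V m B v) \<ge> 4 * k"
    and trees_touch_B: "\<forall>C \<in> C_tree V m B v. \<exists>x \<in> C. \<exists>b \<in> B. adj m x b"
    and B'_sub: "B' \<subseteq> B" and B'_ne: "B' \<noteq> {}" and B'_card: "card B' \<le> k"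
    and Cs_sub: "Cs \<subseteq> C_tree V m B v" and Cs_ne: "Cs \<noteq> {}"
    and cond_a: "\<forall>C \<in> Cs. \<forall>b \<in> B. (\<exists>x \<in> C. adj m b x) \<longrightarrow> b \<in> B'"
    and cond_b: "\<exists>f. (\<forall>C \<in> Cs. f C \<in> B' \<and> (\<exists>x \<in> C. adj m (f C) x))
                    \<and> (\<forall>b \<in> B'. card {C \<in> Cs. f C = b} = 2)"
  shows "yes_instance V m k \<longleftrightarrow> yes_instance V (reduced m v B' Cs) k"
proof -
  obtain f where f: "\<forall>C \<in> Cs. f C \<in> B' \<and> (\<exists>x \<in> C. adj m (f C) x)"
      "\<forall>b \<in> B'. card {C \<in> Cs. f C = b} = 2"
    using cond_b by blast
  \<comment> \<open>of ls only v \<in> V is needed\<close>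
  have "v \<in> V" using ls unfolding large_sparse_def by blast
  interpret double_edge_reduction V m k v B B' Cs f
  proof
    show "\<And>C b x. C \<in> Cs \<Longrightarrow> b \<in> B \<Longrightarrow> x \<in> C \<Longrightarrow> adj m b x \<Longrightarrow> b \<in> B'"
      using cond_a by blast
  qed (use graph \<open>v \<in> V\<close> B_sub no_cycle many_trees B'_sub B'_ne B'_card Cs_sub f in auto)
  show ?thesis by (rule yes_instance_reduced_iff)
qed

end
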